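(* Let $\mathcal{X},\mathcal{Y},\mathcal{Z}$ be sets, $\mathcal{G}$ a measurable space of maps $\mathcal{X}\to\mathcal{Z}$, $\mathcal{H}$ a set of maps $\mathcal{Z}\to\mathbb{R}$, $\ell$ a loss, and fix a within-task online algorithm such that for every $g\in\mathcal{G}$ and every sequence $((x_1,y_1),\dots,(x_m,y_m))\in(\mathcal{X}\times\mathcal{Y})^m$ its average loss $\hat L(g)=\frac1m\sum_{i=1}^m\ell(h_i^g\circ g(x_i),y_i)$ lies in $[0,C]$ and satisfies $\hat L(g)-\inf_{h\in\mathcal{H}}\frac1m\sum_{i=1}^m\ell(h\circ g(x_i),y_i)\le\beta(g,m)$. Let $Q$ be a distribution over distributions on $\mathcal{X}\times\mathcal{Y}$; draw $P_1,\dots,P_T$ i.i.d. from $Q$ and, for each $t$, a sample $(x_{t,i},y_{t,i})_{1\le i\le m}$ i.i.d. from $P_t$. Consider the strategy: (1) run EWA-LL with prior $\pi_1$ and parameter $\eta>0$ on the tasks $t=1,\dots,T$, obtaining $\hat g_1,\dots,\hat g_T$; (2) draw $\mathcal{T}$ uniformly in $\{1,\dots,T\}$ and set $\hat g=\hat g_{\mathcal{T}}$; (3) given a new $P\sim Q$ and a sample $(x_i,y_i)_{1\le i\le m}$ i.i.d. from $P$, run the within-task algorithm with representation $\hat g$ on this sample, obtaining $h_1^{\hat g},\dots,h_m^{\hat g}$; (4) draw $\mathcal{I}$ uniformly in $\{1,\dots,m\}$ and set $\hat h=h^{\hat g}_{\mathcal{I}}$. Let $\mathbb{E}$ denote the expectation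 over all the data, over $P_1,\dots,P_T,P$, over a test pair $(x,y)\sim P$, and over the learner's randomization $(\hat g_t)_t,\mathcal{T},\mathcal{I}$. Then $$\mathbb{E}\big[\ell(\hat h\circ\hat g(x),y)\big]\le\inf_\rho\Bigg\{\mathbb{E}_{g\sim\rho}\Bigg[\mathbb{E}_{P\sim Q}\inf_{h\in\mathcal{H}}\mathbb{E}_{(x,y)\sim P}\big[\ell(h\circ g(x),y)\big]+\beta(g,m)\Bigg]+\frac{\eta C^2}{8}+\frac{\mathcal{K}(\rho,\pi_1)}{\eta T}\Bigg\},$$ the infimum being over all probability measures $\rho$ on $\mathcal{G}$, with $\mathcal{K}$ the Kullback–Leibler divergence.
   Context: Within-task online algorithm: given $g\in\mathcal{G}$ and a sequence $((x_1,y_1),\dots,(x_m,y_m))$, it outputs functions $h_1^g,\dots,h_m^g:\mathcal{Z}\to\mathbb{R}$ where $h_i^g$ depends only on $g$ and $(x_1,y_1),\dots,(x_{i-1},y_{i-1})$; its prediction on $x_i$ is $h_i^g\circ g(x_i)$. The same algorithm is used for every task. EWA-LL on tasks $t=1,\dots,T$: for $t=1,\dots,T$, draw $\hat g_t\sim\pi_t$, run the within-task algorithm on task $t$'s sample with $\hat g_t$, and set $\pi_{t+1}(\mathrm{d}g)\propto\exp(-\eta\hat L_t(g))\pi_t(\mathrm{d}g)$, where $\hat L_t(g)$ is the within-task average loss on task $t$'s sample with representation $g$. Measurability of all maps involved is assumed. *)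

theory Defs
  imports "HOL-Probability.Probability"
begin

text \<open>Samples of size m are functions nat => 'x * 'y, indices 0..m-1 (the paper's 1..m).
  A within-task online algorithm is a map alg g prefix :: 'z => real; the paper's
  h_(i+1)^g is alg g [s_0,...,s_(i-1)], so it depends only on g and the first i pairs.\<close>

definition pref :: "(nat \<Rightarrow> 'a) \<Rightarrow> nat \<Rightarrow> 'a list" where
  "pref S i = map S [0..<i]"

definition avg_loss ::
  "(('x \<Rightarrow> 'z) \<Rightarrow> ('x \<times> 'y) list \<Rightarrow> ('z \<Rightarrow> real)) \<Rightarrow> (real \<Rightarrow> 'y \<Rightarrow> real) \<Rightarrow> nat
    \<Rightarrow> ('x \<Rightarrow> 'z) \<Rightarrow> (nat \<Rightarrow> 'x \<times> 'y) \<Rightarrow> real" where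
  "avg_loss alg l m g S =
     (\<Sum>i<m. l (alg g (pref S i) (g (fst (S i)))) (snd (S i))) / real m"

definition emp_loss ::
  "(real \<Rightarrow> 'y \<Rightarrow> real) \<Rightarrow> nat \<Rightarrow> ('x \<Rightarrow> 'z) \<Rightarrow> ('z \<Rightarrow> real) \<Rightarrow> (nat \<Rightarrow> 'x \<times> 'y) \<Rightarrow> real" where
  "emp_loss l m g h S = (\<Sum>i<m. l (h (g (fst (S i)))) (snd (S i))) / real m"

definition sampleM :: "nat \<Rightarrow> 'a measure \<Rightarrow> (nat \<Rightarrow> 'a) measure" where
  "sampleM m P = PiM {..<m} (\<lambda>_. P)"

text \<open>EWA-LL: ewa pi1 eta L D t is the paper's pi_(t+1) (tasks indexed from 0);
  D t is the sample of task t, L the within-task average loss.\<close>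
fun ewa :: "'g measure \<Rightarrow> real \<Rightarrow> ('g \<Rightarrow> 's \<Rightarrow> real) \<Rightarrow> (nat \<Rightarrow> 's) \<Rightarrow> nat \<Rightarrow> 'g measure" where
  "ewa pi1 eta L D 0 = pi1"
| "ewa pi1 eta L D (Suc t) =
     density (ewa pi1 eta L D t)
       (\<lambda>g. ennreal (exp (- eta * L g (D t)))
            / (\<integral>\<^sup>+ g'. ennreal (exp (- eta * L g' (D t))) \<partial>(ewa pi1 eta L D t)))"

definition KL :: "'a measure \<Rightarrow> 'a measure \<Rightarrow> ereal" where
  "KL rho pr =
     (if absolutely_continuous pr rho \<and> integrable rho (entropy_density (exp 1) pr rho)
      then ereal (KL_divergence (exp 1) pr rho) else \<infinity>)"

text \<open>Expectation of an extended-real valued function: positive part minus negative part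
  (with the ereal convention infinity - infinity = infinity, i.e. undefined expectations
  make the bound vacuous).\<close>
definition ereal_expect :: "'a measure \<Rightarrow> ('a \<Rightarrow> ereal) \<Rightarrow> ereal" where
  "ereal_expect M f =
     enn2ereal (\<integral>\<^sup>+ x. e2ennreal (f x) \<partial>M) - enn2ereal (\<integral>\<^sup>+ x. e2ennreal (- f x) \<partial>M)"

text \<open>Risk of the within-task algorithm run with representation g on a new task:
  E_{P~Q} E_{S~P^m} E_{(x,y)~P} E_{I uniform} l(h_I^g(g x), y).\<close>
definition new_task_risk ::
  "('x \<times> 'y) measure measure \<Rightarrow> (('x \<Rightarrow> 'z) \<Rightarrow> ('x \<times> 'y) list \<Rightarrow> ('z \<Rightarrow> real))
    \<Rightarrow> (real \<Rightarrow> 'y \<Rightarrow> real) \<Rightarrow> nat \<Rightarrow> ('x \<Rightarrow> 'z) \<Rightarrow> ennreal" where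
  "new_task_risk Q alg l m g =
     (\<integral>\<^sup>+ P. (\<integral>\<^sup>+ S. (\<integral>\<^sup>+ z.
        ennreal ((\<Sum>i<m. l (alg g (pref S i) (g (fst z))) (snd z)) / real m)
      \<partial>P) \<partial>sampleM m P) \<partial>Q)"

text \<open>Full expected loss of the meta-strategy: tasks' samples drawn (P_t ~ Q, S_t ~ P_t^m),
  hat g_t ~ pi_t for all t, script T uniform in the T tasks, then new task.\<close>
definition meta_risk ::
  "('x \<times> 'y) measure measure \<Rightarrow> (('x \<Rightarrow> 'z) \<Rightarrow> ('x \<times> 'y) list \<Rightarrow> ('z \<Rightarrow> real))
    \<Rightarrow> (real \<Rightarrow> 'y \<Rightarrow> real) \<Rightarrow> nat \<Rightarrow> nat \<Rightarrow> ('x \<Rightarrow> 'z) measure \<Rightarrow> real \<Rightarrow> ennreal" where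
  "meta_risk Q alg l m T pi1 eta =
     (\<integral>\<^sup>+ D. (\<integral>\<^sup>+ G.
        (\<Sum>t<T. new_task_risk Q alg l m (G t)) / of_nat T
      \<partial>PiM {..<T} (\<lambda>t. ewa pi1 eta (avg_loss alg l m) D t))
      \<partial>PiM {..<T} (\<lambda>_. Q \<bind> (\<lambda>P. sampleM m P)))"

definition oracle_risk ::
  "('x \<times> 'y) measure measure \<Rightarrow> ('z \<Rightarrow> real) set \<Rightarrow> (real \<Rightarrow> 'y \<Rightarrow> real) \<Rightarrow> ('x \<Rightarrow> 'z) \<Rightarrow> ennreal" where
  "oracle_risk Q H l g =
     (\<integral>\<^sup>+ P. (INF h\<in>H. \<integral>\<^sup>+ z. ennreal (l (h (g (fst z))) (snd z)) \<partial>P) \<partial>Q)"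

end

theory Submission
  imports Defs
begin

text \<open>
  EWA-LL runs exponential weights over representations, the losses being the within-task
  average losses, which lie in \<open>[0, C]\<close>. Hoeffding's lemma bounds each increment of the
  log-partition function by \<open>-\<eta>\<close> times the current mixture loss plus \<open>\<eta>\<^sup>2 C\<^sup>2 / 8\<close>, and the
  Donsker--Varadhan inequality compares the telescoped sum with any \<open>\<rho>\<close>, at the price
  \<open>K(\<rho>, \<pi>\<^sub>1) / \<eta>\<close>. In expectation over the tasks, the EWA distribution used on task \<open>t\<close>
  does not depend on the sample of task \<open>t\<close>, so its loss there has the same expectation as
  its loss on a fresh task; likewise \<open>h\<^sub>i\<close> does not see the \<open>i\<close>-th point of its sample
  (online-to-batch conversion). Finally the within-task regret bound compares the algorithm
  with the best predictor of \<open>H\<close> on each sample, at the cost \<open>\<beta>(g, m)\<close>.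
\<close>

section \<open>Independent products\<close>

lemma nn_integral_PiM_component:
  assumes prob: "\<And>j. j \<in> I \<Longrightarrow> prob_space (M j)" and I: "finite I" "i \<in> I"
    and f[measurable]: "f \<in> borel_measurable (M i)"
  shows "(\<integral>\<^sup>+x. f (x i) \<partial>PiM I M) = (\<integral>\<^sup>+y. f y \<partial>M i)"
proof -
  define M' where "M' j = (if j \<in> I then M j else M i)" for j
  have M': "PiM I M = PiM I M'" "M' i = M i" using I by (auto simp: M'_def intro!: PiM_cong)
  interpret product_prob_space M'
    using prob I by (simp add: M'_def product_prob_space_def product_prob_space_axioms_def
        product_sigma_finite_def prob_space_imp_sigma_finite)
  interpret rest: prob_space "PiM (I - {i}) M'"
    using prob by (intro prob_space_PiM) (simp add: M'_def)
  have [measurable]: "f \<in> borel_measurable (M' i)" using M'(2) by simp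
  have "(\<lambda>x. f (x i)) \<in> borel_measurable (PiM I M')" using I by measurable
  then have "(\<integral>\<^sup>+x. f (x i) \<partial>PiM I M') = (\<integral>\<^sup>+y. (\<integral>\<^sup>+x. f y \<partial>PiM (I - {i}) M') \<partial>M' i)"
    using product_nn_integral_insert_rev[of "I - {i}" i "\<lambda>x. f (x i)"] I
    by (simp add: insert_absorb)
  then show ?thesis by (simp add: rest.emeasure_space_1 M')
qed

lemma nn_integral_PiM_resample:
  assumes prob: "prob_space M" and I: "finite I" "i \<in> I"
    and \<phi>[measurable]: "(\<lambda>(x, z). \<phi> x z) \<in> borel_measurable (PiM I (\<lambda>_. M) \<Otimes>\<^sub>M M)"
    and indep: "\<And>x y z. \<phi> (x(i := y)) z = \<phi> x z"
  shows "(\<integral>\<^sup>+x. \<phi> x (x i) \<partial>PiM I (\<lambda>_. M)) = (\<integral>\<^sup>+x. (\<integral>\<^sup>+z. \<phi> x z \<partial>M) \<partial>PiM I (\<lambda>_. M))"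
proof -
  interpret product_prob_space "\<lambda>_. M"
    using prob by (simp add: product_prob_space_def product_prob_space_axioms_def
        product_sigma_finite_def prob_space_imp_sigma_finite)
  interpret M: prob_space M by fact
  interpret rest: prob_space "PiM (I - {i}) (\<lambda>_. M)"
    using prob by (intro prob_space_PiM) auto
  interpret pair_sigma_finite "PiM (I - {i}) (\<lambda>_. M)" M
    by (simp add: M.sigma_finite_measure_axioms pair_sigma_finite.intro rest.sigma_finite_measure_axioms)
  have I': "insert i (I - {i}) = I" using I by auto
  obtain c where c: "c \<in> space M" using M.not_empty by blast
  have "(\<lambda>x. (\<lambda>(f, y). f(i := y)) (x, c)) \<in> PiM (I - {i}) (\<lambda>_. M) \<rightarrow>\<^sub>M PiM (insert i (I - {i})) (\<lambda>_. M)"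
    by (rule measurable_compose[OF measurable_Pair[OF measurable_ident_sets[OF refl] measurable_const[OF c]]
          measurable_add_dim[of i "I - {i}" "\<lambda>_. M"]])
  then have "(\<lambda>x. x(i := c)) \<in> PiM (I - {i}) (\<lambda>_. M) \<rightarrow>\<^sub>M PiM I (\<lambda>_. M)"
    using I' by simp
  then have "(\<lambda>(x, z). \<phi> (x(i := c)) z) \<in> borel_measurable (PiM (I - {i}) (\<lambda>_. M) \<Otimes>\<^sub>M M)"
    by measurable
  then have \<phi>_rest: "(\<lambda>(x, z). \<phi> x z) \<in> borel_measurable (PiM (I - {i}) (\<lambda>_. M) \<Otimes>\<^sub>M M)"
    by (simp add: indep)
  have [measurable]: "(\<lambda>x. \<phi> x (x i)) \<in> borel_measurable (PiM I (\<lambda>_. M))"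
    using I by measurable
  have "(\<integral>\<^sup>+x. \<phi> x (x i) \<partial>PiM I (\<lambda>_. M))
      = (\<integral>\<^sup>+y. (\<integral>\<^sup>+x. \<phi> x y \<partial>PiM (I - {i}) (\<lambda>_. M)) \<partial>M)"
    using product_nn_integral_insert_rev[of "I - {i}" i "\<lambda>x. \<phi> x (x i)"] I I'
    by (simp add: indep)
  also have "\<dots> = (\<integral>\<^sup>+x. (\<integral>\<^sup>+y. \<phi> x y \<partial>M) \<partial>PiM (I - {i}) (\<lambda>_. M))"
    using Fubini'[OF \<phi>_rest] by simp
  also have "\<dots> = (\<integral>\<^sup>+y. (\<integral>\<^sup>+x. (\<integral>\<^sup>+z. \<phi> (x(i := y)) z \<partial>M) \<partial>PiM (I - {i}) (\<lambda>_. M)) \<partial>M)"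
    by (simp add: indep M.emeasure_space_1)
  also have "\<dots> = (\<integral>\<^sup>+x. (\<integral>\<^sup>+z. \<phi> x z \<partial>M) \<partial>PiM I (\<lambda>_. M))"
    using product_nn_integral_insert_rev[of "I - {i}" i "\<lambda>x. \<integral>\<^sup>+z. \<phi> x z \<partial>M"] I I'
      M.borel_measurable_nn_integral[OF \<phi>] by simp
  finally show ?thesis .
qed

lemma (in prob_space) nn_integral_add_const:
  "f \<in> borel_measurable M \<Longrightarrow> (\<integral>\<^sup>+x. f x + c \<partial>M) = (\<integral>\<^sup>+x. f x \<partial>M) + c"
  by (subst nn_integral_add) (auto simp: emeasure_space_1)

lemma (in prob_space) nn_integral_eq_integral_bounded:
  assumes "f \<in> borel_measurable M" "\<And>x. x \<in> space M \<Longrightarrow> 0 \<le> f x \<and> f x \<le> B"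
  shows "(\<integral>\<^sup>+x. ennreal (f x) \<partial>M) = ennreal (\<integral>x. f x \<partial>M)"
  using assms by (intro nn_integral_eq_integral integrable_const_bound[where B=B] AE_I2) auto

lemma ennreal_of_nat_mult_add_divide:
  assumes "0 < n" "0 \<le> c"
  shows "(of_nat n * a + ennreal c) / of_nat n = a + ennreal (c / n)"
proof -
  have "a * of_nat n / of_nat n = a"
    using assms(1) by (intro mult_divide_eq_ennreal) auto
  moreover have "ennreal c / of_nat n = ennreal (c / n)"
    using assms by (simp add: ennreal_of_nat_eq_real_of_nat divide_ennreal)
  ultimately show ?thesis by (simp add: add_divide_distrib_ennreal mult.commute)
qed

lemma INF_ennreal_add_const_nonempty:
  fixes f :: "'a \<Rightarrow> ennreal"
  assumes "A \<noteq> {}"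
  shows "(INF a\<in>A. f a + c) = (INF a\<in>A. f a) + c"
  using continuous_at_Inf_mono[of "\<lambda>x. x + c" "f ` A"] assms
    continuous_add[of "at_right (Inf (f ` A))" "\<lambda>x. x" "\<lambda>x. c"]
  by (auto simp: mono_def image_comp)

lemma measurable_emeasure_prob_algebra:
  "A \<in> sets M \<Longrightarrow> (\<lambda>P. emeasure P A) \<in> borel_measurable (prob_algebra M)"
  unfolding prob_algebra_def by (intro measurable_restrict_space1 measurable_emeasure_subprob_algebra)

lemma sets_sampleM_cong: "sets P = sets M \<Longrightarrow> sets (sampleM m P) = sets (sampleM m M)"
  unfolding sampleM_def by (intro sets_PiM_cong) auto

lemma prob_space_sampleM: "prob_space P \<Longrightarrow> prob_space (sampleM m P)"
  unfolding sampleM_def by (intro prob_space_PiM) auto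

lemma space_sampleM: "space (sampleM m M) = {..<m} \<rightarrow>\<^sub>E space M"
  unfolding sampleM_def by (simp add: space_PiM)

lemma measurable_sampleM:
  "(\<lambda>P. sampleM m P) \<in> prob_algebra M \<rightarrow>\<^sub>M prob_algebra (sampleM m M)"
proof (rule measurable_prob_algebra_generated[OF _ Int_stable_prod_algebra prod_algebra_sets_into_space])
  show "sets (sampleM m M) = sigma_sets (\<Pi>\<^sub>E i\<in>{..<m}. space M) (prod_algebra {..<m} (\<lambda>_. M))"
    unfolding sampleM_def by (simp add: sets_PiM)
next
  fix P assume "P \<in> space (prob_algebra M)"
  then have "prob_space P" "sets P = sets M" by (auto simp: space_prob_algebra)
  then show "prob_space (sampleM m P)" "sets (sampleM m P) = sets (sampleM m M)"
    using prob_space_sampleM sets_sampleM_cong by blast+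
next
  fix A assume "A \<in> prod_algebra {..<m} (\<lambda>_. M)"
  then obtain E where E: "A = Pi\<^sub>E {..<m} E" "E \<in> (\<Pi> i\<in>{..<m}. sets M)"
    by (rule prod_algebraE_all)
  have "emeasure (sampleM m P) A = (\<Prod>i<m. emeasure P (E i))"
    if "P \<in> space (prob_algebra M)" for P
  proof -
    from that have P: "prob_space P" "sets P = sets M" by (auto simp: space_prob_algebra)
    interpret product_sigma_finite "\<lambda>_. P"
      using P by (simp add: product_sigma_finite_def prob_space_imp_sigma_finite)
    show ?thesis unfolding sampleM_def E using E P by (intro emeasure_PiM) auto
  qed
  moreover have "(\<lambda>P. \<Prod>i<m. emeasure P (E i)) \<in> borel_measurable (prob_algebra M)"
    using E by (intro borel_measurable_prod_ennreal measurable_emeasure_prob_algebra) auto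
  ultimately show "(\<lambda>P. emeasure (sampleM m P) A) \<in> borel_measurable (prob_algebra M)"
    by (subst measurable_cong) auto
qed

section \<open>A variational bound for the Kullback--Leibler divergence\<close>

lemma Gibbs_inequality_density:
  assumes M: "prob_space M" and N: "prob_space (density M D)"
    and D[measurable]: "D \<in> borel_measurable M" and D_nonneg: "\<And>x. 0 \<le> D x"
    and D_pos: "AE x in density M D. 0 < D x" and int_ln_D: "integrable (density M D) (\<lambda>x. ln (D x))"
    and F[measurable]: "F \<in> borel_measurable M" and F_bound: "\<And>x. x \<in> space M \<Longrightarrow> \<bar>F x\<bar> \<le> B"
  shows "(\<integral>x. F x \<partial>density M D) - (\<integral>x. ln (D x) \<partial>density M D) \<le> ln (\<integral>x. exp (F x) \<partial>M)"
proof -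
  interpret M: prob_space M by fact
  interpret N: prob_space "density M D" by fact
  have N_space: "measure (density M D) (space M) = 1" using N.prob_space by simp
  have int_F: "integrable (density M D) F"
    using F_bound by (intro N.integrable_const_bound[where B=B]) auto
  define Z where "Z = (\<integral>x. exp (F x) \<partial>M)"
  have int_exp_F: "integrable M (\<lambda>x. exp (F x))"
    using F_bound by (intro M.integrable_const_bound[where B="exp B"]) (auto simp: abs_le_iff)
  have "(\<integral>x. exp (- B) \<partial>M) \<le> Z"
    unfolding Z_def using F_bound by (intro integral_mono int_exp_F) (auto simp: abs_le_iff, force)
  then have Z_pos: "0 < Z" by (simp add: M.prob_space) (meson exp_gt_zero less_le_trans)
  text \<open>\<open>u\<close> is the density of the Gibbs measure \<open>exp F / Z \<cdot> M\<close> with respect to \<open>density M D\<close>.\<close>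
  define u where "u x = exp (F x) / (Z * D x)" for x
  have [measurable]: "u \<in> borel_measurable M" unfolding u_def by measurable
  have D_u: "D x * u x = (if D x = 0 then 0 else exp (F x) / Z)" for x
    unfolding u_def by auto
  have int_D_u: "integrable M (\<lambda>x. D x * u x)"
    unfolding D_u using F_bound Z_pos
    by (intro M.integrable_const_bound[where B="exp B / Z"]) (auto intro!: divide_right_mono simp: abs_le_iff u_def)
  have int_u: "integrable (density M D) u"
    using D_nonneg int_D_u by (subst integrable_density) auto
  have "(\<integral>x. u x \<partial>density M D) = (\<integral>x. D x * u x \<partial>M)"
    using D_nonneg by (subst integral_density) auto
  also have "\<dots> \<le> (\<integral>x. exp (F x) / Z \<partial>M)"
    using int_D_u int_exp_F Z_pos by (intro integral_mono) (auto simp: D_u)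
  also have "\<dots> = 1" unfolding Z_def using Z_pos Z_def by simp
  finally have int_u_le_1: "(\<integral>x. u x \<partial>density M D) \<le> 1" .
  have pointwise: "AE x in density M D. F x - ln (D x) - ln Z \<le> u x - 1"
    using D_pos
  proof eventually_elim
    fix x assume "0 < D x"
    then have "ln (u x) = F x - ln (D x) - ln Z"
      unfolding u_def using Z_pos by (simp add: ln_div ln_mult)
    moreover have "ln (u x) \<le> u x - 1"
      using \<open>0 < D x\<close> Z_pos by (intro ln_le_minus_one) (simp add: u_def)
    ultimately show "F x - ln (D x) - ln Z \<le> u x - 1" by simp
  qed
  have "(\<integral>x. F x \<partial>density M D) - (\<integral>x. ln (D x) \<partial>density M D) - ln Z
      = (\<integral>x. F x - ln (D x) - ln Z \<partial>density M D)"
    using int_F int_ln_D by (simp add: N_space)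
  also have "\<dots> \<le> (\<integral>x. u x - 1 \<partial>density M D)"
    by (rule integral_mono_AE) (use int_F int_ln_D int_u pointwise in auto)
  also have "\<dots> \<le> 0" using int_u int_u_le_1 by (simp add: N_space)
  finally show ?thesis unfolding Z_def by simp
qed

lemma KL_divergence_variational_bound:
  assumes M: "prob_space M" and N: "prob_space N" and sets_N: "sets N = sets M"
    and ac: "absolutely_continuous M N"
    and int: "integrable N (entropy_density (exp 1) M N)"
    and F: "F \<in> borel_measurable M" and F_bound: "\<And>x. x \<in> space M \<Longrightarrow> \<bar>F x\<bar> \<le> B"
  shows "(\<integral>x. F x \<partial>N) - KL_divergence (exp 1) M N \<le> ln (\<integral>x. exp (F x) \<partial>M)"
proof -
  interpret M: prob_space M by fact
  interpret N: prob_space N by fact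
  have "finite_measure N" by unfold_locales
  from M.real_RN_deriv[OF this ac sets_N] obtain D
    where D[measurable]: "D \<in> borel_measurable M"
      and D_RN: "AE x in M. RN_deriv M N x = ennreal (D x)"
      and D_pos: "AE x in N. 0 < D x"
      and D_nonneg: "\<And>x. 0 \<le> D x"
    by this auto
  have "N = density M (RN_deriv M N)" using M.density_RN_deriv[OF ac sets_N] ..
  also have "\<dots> = density M D" using D_RN by (auto intro!: density_cong)
  finally have N_eq: "N = density M D" .
  have ent: "AE x in N. entropy_density (exp 1) M N x = ln (D x)"
    using absolutely_continuous_AE[OF sets_N ac D_RN]
    by eventually_elim (simp add: entropy_density_def log_def D_nonneg)
  have KL: "KL_divergence (exp 1) M N = (\<integral>x. ln (D x) \<partial>N)"
    unfolding KL_divergence_def using ent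
    by (intro integral_cong_AE) (auto simp: sets_N cong: measurable_cong_sets)
  have int_ln_D: "integrable N (\<lambda>x. ln (D x))"
    using int ent by (subst integrable_cong_AE[where g="entropy_density (exp 1) M N"])
      (auto simp: sets_N cong: measurable_cong_sets)
  have "(\<integral>x. F x \<partial>density M D) - (\<integral>x. ln (D x) \<partial>density M D) \<le> ln (\<integral>x. exp (F x) \<partial>M)"
    using N D_pos int_ln_D unfolding N_eq by (rule Gibbs_inequality_density[OF M _ D D_nonneg _ _ F F_bound])
  then show ?thesis unfolding KL by (simp add: N_eq)
qed

lemma KL_divergence_nonneg_prob:
  assumes "prob_space M" "prob_space N" "sets N = sets M" "absolutely_continuous M N"
    "integrable N (entropy_density (exp 1) M N)"
  shows "0 \<le> KL_divergence (exp 1) M N"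
  using KL_divergence_variational_bound[OF assms, of "\<lambda>_. 0" 0] by (simp add: prob_space.prob_space[OF assms(1)])

section \<open>Exponentially weighted aggregation\<close>

definition cum_loss :: "('g \<Rightarrow> 's \<Rightarrow> real) \<Rightarrow> (nat \<Rightarrow> 's) \<Rightarrow> nat \<Rightarrow> 'g \<Rightarrow> real" where
  "cum_loss L D t g = (\<Sum>s<t. L g (D s))"

definition ewa_partition :: "'g measure \<Rightarrow> real \<Rightarrow> ('g \<Rightarrow> 's \<Rightarrow> real) \<Rightarrow> (nat \<Rightarrow> 's) \<Rightarrow> nat \<Rightarrow> real" where
  "ewa_partition pi1 eta L D t = (\<integral>g. exp (- eta * cum_loss L D t g) \<partial>pi1)"

definition ewa_weight :: "'g measure \<Rightarrow> real \<Rightarrow> ('g \<Rightarrow> 's \<Rightarrow> real) \<Rightarrow> (nat \<Rightarrow> 's) \<Rightarrow> nat \<Rightarrow> 'g \<Rightarrow> real" where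
  "ewa_weight pi1 eta L D t g = exp (- eta * cum_loss L D t g) / ewa_partition pi1 eta L D t"

lemma cum_loss_Suc: "cum_loss L D (Suc t) g = cum_loss L D t g + L g (D t)"
  by (simp add: cum_loss_def)

lemma ewa_weight_fun_upd: "ewa_weight pi1 eta L (D(t := S)) t g = ewa_weight pi1 eta L D t g"
  by (simp add: ewa_weight_def ewa_partition_def cum_loss_def)

locale ewa_bounded_losses =
  fixes pi1 :: "'g measure" and eta C :: real and L :: "'g \<Rightarrow> 's \<Rightarrow> real"
    and D :: "nat \<Rightarrow> 's" and T :: nat
  assumes prob_space_pi1: "prob_space pi1" and eta_pos: "0 < eta"
    and measurable_loss: "\<And>t. t < T \<Longrightarrow> (\<lambda>g. L g (D t)) \<in> borel_measurable pi1"
    and loss_bounds: "\<And>t g. t < T \<Longrightarrow> g \<in> space pi1 \<Longrightarrow> 0 \<le> L g (D t) \<and> L g (D t) \<le> C"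
begin

interpretation pi1: prob_space pi1 by (rule prob_space_pi1)

abbreviation "V \<equiv> cum_loss L D"
abbreviation "Z \<equiv> ewa_partition pi1 eta L D"
abbreviation "w \<equiv> ewa_weight pi1 eta L D"

lemma measurable_cum_loss[measurable]: "t \<le> T \<Longrightarrow> V t \<in> borel_measurable pi1"
  unfolding cum_loss_def[abs_def] using measurable_loss by (intro borel_measurable_sum) auto

lemma cum_loss_bounds: "t \<le> T \<Longrightarrow> g \<in> space pi1 \<Longrightarrow> 0 \<le> V t g \<and> V t g \<le> t * C"
  using sum_mono[of "{..<t}" "\<lambda>s. L g (D s)" "\<lambda>_. C"] loss_bounds
  unfolding cum_loss_def by (auto intro!: sum_nonneg)

lemma integrable_exp_cum_loss: "t \<le> T \<Longrightarrow> integrable pi1 (\<lambda>g. exp (- eta * V t g))"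
  by (rule pi1.integrable_const_bound[where B=1])
     (use cum_loss_bounds eta_pos in \<open>auto intro!: AE_I2 simp: mult_nonneg_nonneg\<close>)

lemma ewa_partition_pos: "t \<le> T \<Longrightarrow> 0 < Z t"
proof -
  assume t: "t \<le> T"
  have "(\<integral>g. exp (- eta * (t * C)) \<partial>pi1) \<le> Z t"
    unfolding ewa_partition_def using cum_loss_bounds[OF t] eta_pos
    by (intro integral_mono integrable_exp_cum_loss[OF t]) (auto intro!: mult_left_mono)
  then show ?thesis by (simp add: pi1.prob_space) (meson exp_gt_zero less_le_trans)
qed

lemma ewa_partition_0: "Z 0 = 1"
  by (simp add: ewa_partition_def cum_loss_def pi1.prob_space)

lemma measurable_ewa_weight[measurable]: "t \<le> T \<Longrightarrow> w t \<in> borel_measurable pi1"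
  unfolding ewa_weight_def[abs_def] by measurable

lemma ewa_weight_nonneg: "t \<le> T \<Longrightarrow> 0 \<le> w t g"
  unfolding ewa_weight_def using ewa_partition_pos[of t] by simp

lemma nn_integral_ewa_weight: "t \<le> T \<Longrightarrow> (\<integral>\<^sup>+g. ennreal (w t g) \<partial>pi1) = 1"
proof -
  assume t: "t \<le> T"
  have "(\<integral>\<^sup>+g. ennreal (w t g) \<partial>pi1) = ennreal (\<integral>g. w t g \<partial>pi1)"
    using integrable_exp_cum_loss[OF t] ewa_weight_nonneg[OF t]
    by (intro nn_integral_eq_integral) (auto simp: ewa_weight_def)
  also have "(\<integral>g. w t g \<partial>pi1) = 1"
    using ewa_partition_pos[OF t] by (simp add: ewa_weight_def ewa_partition_def)
  finally show ?thesis by simp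
qed

lemma nn_integral_exp_loss_weighted:
  assumes t: "t < T"
  shows "(\<integral>\<^sup>+g. ennreal (exp (- eta * L g (D t))) \<partial>density pi1 (\<lambda>g. ennreal (w t g)))
    = ennreal (Z (Suc t) / Z t)"
proof -
  have [measurable]: "(\<lambda>g. L g (D t)) \<in> borel_measurable pi1" using measurable_loss[OF t] .
  have "(\<integral>\<^sup>+g. ennreal (exp (- eta * L g (D t))) \<partial>density pi1 (\<lambda>g. ennreal (w t g)))
      = (\<integral>\<^sup>+g. ennreal (exp (- eta * V (Suc t) g) / Z t) \<partial>pi1)"
    using t ewa_weight_nonneg[of t]
    by (subst nn_integral_density)
       (auto simp: ennreal_mult[symmetric] ewa_weight_def cum_loss_Suc field_simps exp_add[symmetric])
  also have "\<dots> = ennreal (\<integral>g. exp (- eta * V (Suc t) g) / Z t \<partial>pi1)"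
    using integrable_exp_cum_loss[of "Suc t"] ewa_partition_pos[of t] t
    by (intro nn_integral_eq_integral) auto
  finally show ?thesis by (simp add: ewa_partition_def)
qed

lemma ewa_eq_density: "t \<le> T \<Longrightarrow> ewa pi1 eta L D t = density pi1 (\<lambda>g. ennreal (w t g))"
proof (induction t)
  case 0
  then show ?case by (simp add: ewa_weight_def ewa_partition_0 cum_loss_def density_1)
next
  case (Suc t)
  then have t: "t < T" by simp
  have Z_pos: "0 < Z t" "0 < Z (Suc t)" using ewa_partition_pos t by auto
  have [measurable]: "(\<lambda>g. L g (D t)) \<in> borel_measurable pi1" using measurable_loss[OF t] .
  have "ewa pi1 eta L D (Suc t) = density (density pi1 (\<lambda>g. ennreal (w t g)))
       (\<lambda>g. ennreal (exp (- eta * L g (D t))) / ennreal (Z (Suc t) / Z t))"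
    unfolding ewa.simps(2) Suc.IH[OF less_imp_le[OF t]] nn_integral_exp_loss_weighted[OF t] ..
  also have "\<dots> = density pi1 (\<lambda>g. ennreal (w t g) * (ennreal (exp (- eta * L g (D t))) / ennreal (Z (Suc t) / Z t)))"
    using t by (intro density_density_eq) measurable
  also have "\<dots> = density pi1 (\<lambda>g. ennreal (w (Suc t) g))"
  proof (intro density_cong AE_I2)
    fix g
    have "w t g * (exp (- eta * L g (D t)) / (Z (Suc t) / Z t)) = w (Suc t) g"
      using Z_pos by (simp add: ewa_weight_def cum_loss_Suc field_simps exp_add[symmetric])
    then show "ennreal (w t g) * (ennreal (exp (- eta * L g (D t))) / ennreal (Z (Suc t) / Z t))
      = ennreal (w (Suc t) g)"
      using Z_pos ewa_weight_nonneg[of t g] t by (simp add: divide_ennreal ennreal_mult[symmetric])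
  qed (use t Suc.prems in \<open>auto intro: less_imp_le\<close>)
  finally show ?case .
qed

lemma sets_ewa: "t \<le> T \<Longrightarrow> sets (ewa pi1 eta L D t) = sets pi1"
  by (simp add: ewa_eq_density)

lemma prob_space_ewa: "t \<le> T \<Longrightarrow> prob_space (ewa pi1 eta L D t)"
  by (rule prob_spaceI)
     (simp add: ewa_eq_density emeasure_density nn_integral_ewa_weight cong: nn_integral_cong)

lemma nn_integral_ewa:
  "t \<le> T \<Longrightarrow> f \<in> borel_measurable pi1 \<Longrightarrow>
    (\<integral>\<^sup>+g. f g \<partial>ewa pi1 eta L D t) = (\<integral>\<^sup>+g. ennreal (w t g) * f g \<partial>pi1)"
  by (simp add: ewa_eq_density nn_integral_density)

text \<open>Hoeffding's lemma applied to the loss under the current EWA distribution.\<close>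
lemma ln_partition_Suc_le:
  assumes t: "t < T"
  shows "ln (Z (Suc t)) - ln (Z t) \<le> - eta * (\<integral>g. L g (D t) \<partial>ewa pi1 eta L D t) + eta\<^sup>2 * C\<^sup>2 / 8"
proof -
  let ?M = "ewa pi1 eta L D t" and ?E = "\<integral>g. L g (D t) \<partial>ewa pi1 eta L D t"
  interpret M: prob_space ?M using t by (intro prob_space_ewa) simp
  have [measurable]: "(\<lambda>g. L g (D t)) \<in> borel_measurable ?M"
    using measurable_loss[OF t] sets_ewa[of t] t by (simp cong: measurable_cong_sets)
  interpret interval_bounded_random_variable ?M "\<lambda>g. - L g (D t)" "- C" 0
    using loss_bounds[OF t] sets_eq_imp_space_eq[OF sets_ewa[of t]] t
    by unfold_locales (auto intro!: AE_I2)
  have Z_pos: "0 < Z t" "0 < Z (Suc t)" using ewa_partition_pos t by auto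
  have norm: "(\<integral>\<^sup>+g. ennreal (exp (- eta * L g (D t))) \<partial>?M) = ennreal (Z (Suc t) / Z t)"
    using nn_integral_exp_loss_weighted[OF t] ewa_eq_density[of t] t by simp
  have "ennreal (exp (eta * ?E) * (Z (Suc t) / Z t))
      = ennreal (exp (eta * ?E)) * (\<integral>\<^sup>+g. ennreal (exp (- eta * L g (D t))) \<partial>?M)"
    unfolding norm using Z_pos by (intro ennreal_mult) auto
  also have "\<dots> = (\<integral>\<^sup>+g. ennreal (exp (eta * ?E)) * ennreal (exp (- eta * L g (D t))) \<partial>?M)"
    by (rule nn_integral_cmult[symmetric]) measurable
  also have "\<dots> = (\<integral>\<^sup>+g. ennreal (exp (eta * (- L g (D t) - M.expectation (\<lambda>g. - L g (D t))))) \<partial>?M)"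
    by (intro nn_integral_cong) (simp add: ennreal_mult[symmetric] exp_add[symmetric] algebra_simps)
  also have "\<dots> \<le> ennreal (exp (eta\<^sup>2 * (0 - - C)\<^sup>2 / 8))"
    by (rule Hoeffdings_lemma_nn_integral[OF eta_pos])
  finally have "exp (eta * ?E) * (Z (Suc t) / Z t) \<le> exp (eta\<^sup>2 * C\<^sup>2 / 8)"
    by (subst (asm) ennreal_le_iff) auto
  then have "ln (exp (eta * ?E) * (Z (Suc t) / Z t)) \<le> eta\<^sup>2 * C\<^sup>2 / 8"
    using Z_pos by (metis exp_gt_zero ln_exp ln_le_cancel_iff mult_pos_pos divide_pos_pos)
  then show ?thesis using Z_pos by (simp add: ln_div ln_mult)
qed

lemma ln_partition_le:
  "k \<le> T \<Longrightarrow> ln (Z k) \<le> - eta * (\<Sum>t<k. \<integral>g. L g (D t) \<partial>ewa pi1 eta L D t) + k * (eta\<^sup>2 * C\<^sup>2 / 8)"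
proof (induction k)
  case 0
  then show ?case by (simp add: ewa_partition_0)
next
  case (Suc k)
  then show ?case using ln_partition_Suc_le[of k] by (simp add: algebra_simps)
qed

lemma ewa_regret:
  assumes rho: "prob_space rho" "sets rho = sets pi1"
    and ac: "absolutely_continuous pi1 rho" and int: "integrable rho (entropy_density (exp 1) pi1 rho)"
  shows "(\<Sum>t<T. \<integral>g. L g (D t) \<partial>ewa pi1 eta L D t)
    \<le> (\<Sum>t<T. \<integral>g. L g (D t) \<partial>rho) + T * eta * C\<^sup>2 / 8 + KL_divergence (exp 1) pi1 rho / eta"
proof -
  interpret rho: prob_space rho by (rule rho(1))
  have space_rho: "space rho = space pi1" using rho(2) by (rule sets_eq_imp_space_eq)
  have "\<bar>- eta * V T g\<bar> \<le> eta * (T * C)" if "g \<in> space pi1" for g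
    using cum_loss_bounds[OF order_refl that] eta_pos by (auto simp: abs_mult intro!: mult_left_mono)
  from KL_divergence_variational_bound[OF prob_space_pi1 rho ac int _ this]
  have DV: "(\<integral>g. - eta * V T g \<partial>rho) - KL_divergence (exp 1) pi1 rho \<le> ln (Z T)"
    by (simp add: ewa_partition_def)
  have "integrable rho (\<lambda>g. L g (D t))" if t: "t < T" for t
    using measurable_loss[OF t] loss_bounds[OF t] rho(2) space_rho
    by (intro rho.integrable_const_bound[where B=C]) (auto cong: measurable_cong_sets)
  then have "(\<integral>g. - eta * V T g \<partial>rho) = - eta * (\<Sum>t<T. \<integral>g. L g (D t) \<partial>rho)"
    by (simp add: cum_loss_def Bochner_Integration.integral_sum)
  then have "eta * (\<Sum>t<T. \<integral>g. L g (D t) \<partial>ewa pi1 eta L D t)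
      \<le> eta * ((\<Sum>t<T. \<integral>g. L g (D t) \<partial>rho) + T * eta * C\<^sup>2 / 8 + KL_divergence (exp 1) pi1 rho / eta)"
    using DV ln_partition_le[OF order_refl] eta_pos by (simp add: algebra_simps power2_eq_square)
  then show ?thesis using eta_pos by simp
qed

lemma nn_integral_loss_eq_integral:
  assumes t: "t < T" and M: "prob_space M" "sets M = sets pi1"
  shows "(\<integral>\<^sup>+g. ennreal (L g (D t)) \<partial>M) = ennreal (\<integral>g. L g (D t) \<partial>M)"
    and "0 \<le> (\<integral>g. L g (D t) \<partial>M)"
proof -
  interpret M: prob_space M by (rule M(1))
  note space_M = sets_eq_imp_space_eq[OF M(2)]
  show "(\<integral>\<^sup>+g. ennreal (L g (D t)) \<partial>M) = ennreal (\<integral>g. L g (D t) \<partial>M)"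
    using measurable_loss[OF t] loss_bounds[OF t] M(2) space_M
    by (intro M.nn_integral_eq_integral_bounded) (auto cong: measurable_cong_sets)
  show "0 \<le> (\<integral>g. L g (D t) \<partial>M)"
    using loss_bounds[OF t] space_M by (intro integral_nonneg_AE AE_I2) auto
qed

end

section \<open>Within-task learning\<close>

lemma pref_fun_upd_same: "pref (S(i := z)) i = pref S i"
  unfolding pref_def by auto

lemma avg_loss_nonneg: "(\<And>u y. 0 \<le> l u y) \<Longrightarrow> 0 \<le> avg_loss alg l m g S"
  unfolding avg_loss_def by (auto intro!: sum_nonneg divide_nonneg_nonneg)

lemma emp_loss_nonneg: "(\<And>u y. 0 \<le> l u y) \<Longrightarrow> 0 \<le> emp_loss l m g h S"
  unfolding emp_loss_def by (auto intro!: sum_nonneg divide_nonneg_nonneg)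

lemma ennreal_sum_divide_nonneg:
  "(\<And>i. 0 \<le> f i) \<Longrightarrow> ennreal ((\<Sum>i<m. f i) / real m) = (\<Sum>i<m. ennreal (f i / m))"
  by (simp add: sum_divide_distrib sum_ennreal)

locale within_task =
  fixes XY :: "('x \<times> 'y) measure"
    and Gm :: "('x \<Rightarrow> 'z) measure"
    and H :: "('z \<Rightarrow> real) set"
    and l :: "real \<Rightarrow> 'y \<Rightarrow> real"
    and alg :: "('x \<Rightarrow> 'z) \<Rightarrow> ('x \<times> 'y) list \<Rightarrow> ('z \<Rightarrow> real)"
    and beta :: "('x \<Rightarrow> 'z) \<Rightarrow> nat \<Rightarrow> real"
    and m :: nat
    and Q :: "('x \<times> 'y) measure measure"
  assumes m_pos: "0 < m"
    and loss_nonneg: "\<And>u y. 0 \<le> l u y"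
    and alg_regret: "\<And>g S. g \<in> space Gm \<Longrightarrow> S \<in> {..<m} \<rightarrow> space XY \<Longrightarrow>
          ereal (avg_loss alg l m g S) - (INF h\<in>H. ereal (emp_loss l m g h S)) \<le> ereal (beta g m)"
    and Q_prob: "prob_space Q" and Q_sets: "sets Q = sets (prob_algebra XY)"
    and meas_avg: "(\<lambda>(g, S). avg_loss alg l m g S) \<in> borel_measurable (Gm \<Otimes>\<^sub>M sampleM m XY)"
    and meas_alg: "\<And>i. i < m \<Longrightarrow>
          (\<lambda>(g, S, z). l (alg g (pref S i) (g (fst z))) (snd z))
            \<in> borel_measurable (Gm \<Otimes>\<^sub>M sampleM m XY \<Otimes>\<^sub>M XY)"
    and meas_H: "\<And>h. h \<in> H \<Longrightarrow>
          (\<lambda>(g, z). l (h (g (fst z))) (snd z)) \<in> borel_measurable (Gm \<Otimes>\<^sub>M XY)"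
    and meas_inf: "(\<lambda>(g, P). INF h\<in>H. \<integral>\<^sup>+ z. ennreal (l (h (g (fst z))) (snd z)) \<partial>P)
          \<in> borel_measurable (Gm \<Otimes>\<^sub>M prob_algebra XY)"
begin

abbreviation "L \<equiv> avg_loss alg l m"

definition sample_dist :: "(nat \<Rightarrow> 'x \<times> 'y) measure" where
  "sample_dist = Q \<bind> (\<lambda>P. sampleM m P)"

lemma Q_in_prob_algebra: "Q \<in> space (prob_algebra (prob_algebra XY))"
  using Q_prob Q_sets by (simp add: space_prob_algebra)

lemma measurable_sampleM_Q: "(\<lambda>P. sampleM m P) \<in> Q \<rightarrow>\<^sub>M prob_algebra (sampleM m XY)"
  using measurable_sampleM[of m XY] by (simp cong: measurable_cong_sets add: Q_sets)

lemma prob_space_sample_dist: "prob_space sample_dist"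
  unfolding sample_dist_def using Q_in_prob_algebra measurable_sampleM by (rule prob_space_bind')

lemma sets_sample_dist: "sets sample_dist = sets (sampleM m XY)"
  unfolding sample_dist_def using Q_in_prob_algebra measurable_sampleM by (rule sets_bind')

lemma measurable_alg_loss:
  assumes g: "g \<in> space Gm" and i: "i < m" and P: "sets P = sets XY"
  shows "(\<lambda>(S, z). l (alg g (pref S i) (g (fst z))) (snd z)) \<in> borel_measurable (sampleM m P \<Otimes>\<^sub>M P)"
proof -
  have "sets (sampleM m P \<Otimes>\<^sub>M P) = sets (sampleM m XY \<Otimes>\<^sub>M XY)"
    using P by (intro sets_pair_measure_cong sets_sampleM_cong)
  then show ?thesis
    using measurable_Pair2[OF meas_alg[OF i] g] by (simp cong: measurable_cong_sets)
qed

lemma measurable_avg_loss: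
  "g \<in> space Gm \<Longrightarrow> sets M = sets (sampleM m XY) \<Longrightarrow> L g \<in> borel_measurable M"
  using measurable_Pair2[OF meas_avg] by (simp cong: measurable_cong_sets)

lemma measurable_hyp_loss:
  "g \<in> space Gm \<Longrightarrow> h \<in> H \<Longrightarrow> sets P = sets XY \<Longrightarrow> (\<lambda>z. l (h (g (fst z))) (snd z)) \<in> borel_measurable P"
  using measurable_Pair2[OF meas_H] by (simp cong: measurable_cong_sets)

text \<open>Online-to-batch conversion: \<open>h\<^sub>i\<close> does not see the \<open>i\<close>-th sample point, so evaluating
  it on a fresh test point or on that sample point has the same expectation.\<close>
lemma nn_integral_test_loss_eq_avg_loss:
  assumes g: "g \<in> space Gm" and P: "P \<in> space (prob_algebra XY)"
  shows "(\<integral>\<^sup>+S. (\<integral>\<^sup>+z. ennreal ((\<Sum>i<m. l (alg g (pref S i) (g (fst z))) (snd z)) / real m) \<partial>P) \<partial>sampleM m P)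
       = (\<integral>\<^sup>+S. ennreal (L g S) \<partial>sampleM m P)"
proof -
  from P have P_prob: "prob_space P" and P_sets: "sets P = sets XY"
    by (auto simp: space_prob_algebra)
  interpret P: prob_space P by (rule P_prob)
  let ?f = "\<lambda>i S z. ennreal (l (alg g (pref S i) (g (fst z))) (snd z) / m)"
  have f: "(\<lambda>(S, z). ?f i S z) \<in> borel_measurable (PiM {..<m} (\<lambda>_. P) \<Otimes>\<^sub>M P)" if "i < m" for i
    using measurable_alg_loss[OF g that P_sets] unfolding sampleM_def by measurable
  have f_diag: "(\<lambda>S. ?f i S (S i)) \<in> borel_measurable (sampleM m P)" if "i < m" for i
  proof -
    have "(\<lambda>S. (\<lambda>(S, z). ?f i S z) (S, S i)) \<in> borel_measurable (PiM {..<m} (\<lambda>_. P))"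
      using that by (intro measurable_compose[OF _ f[OF that]] measurable_Pair measurable_ident_sets
          measurable_component_singleton) auto
    then show ?thesis unfolding sampleM_def by simp
  qed
  have "(\<integral>\<^sup>+S. (\<integral>\<^sup>+z. ennreal ((\<Sum>i<m. l (alg g (pref S i) (g (fst z))) (snd z)) / real m) \<partial>P) \<partial>sampleM m P)
      = (\<integral>\<^sup>+S. (\<Sum>i<m. \<integral>\<^sup>+z. ?f i S z \<partial>P) \<partial>sampleM m P)"
  proof (intro nn_integral_cong)
    fix S assume "S \<in> space (sampleM m P)"
    then show "(\<integral>\<^sup>+z. ennreal ((\<Sum>i<m. l (alg g (pref S i) (g (fst z))) (snd z)) / real m) \<partial>P)
        = (\<Sum>i<m. \<integral>\<^sup>+z. ?f i S z \<partial>P)"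
      unfolding ennreal_sum_divide_nonneg[OF loss_nonneg] sampleM_def
      by (intro nn_integral_sum) (use measurable_Pair2[OF f] in simp)
  qed
  also have "\<dots> = (\<Sum>i<m. \<integral>\<^sup>+S. (\<integral>\<^sup>+z. ?f i S z \<partial>P) \<partial>sampleM m P)"
    using P.borel_measurable_nn_integral[OF f] unfolding sampleM_def by (intro nn_integral_sum) auto
  also have "\<dots> = (\<Sum>i<m. \<integral>\<^sup>+S. ?f i S (S i) \<partial>sampleM m P)"
    unfolding sampleM_def
    by (intro sum.cong refl nn_integral_PiM_resample[symmetric, OF P_prob _ _ f])
       (auto simp: pref_fun_upd_same)
  also have "\<dots> = (\<integral>\<^sup>+S. (\<Sum>i<m. ?f i S (S i)) \<partial>sampleM m P)"
    using f_diag by (intro nn_integral_sum[symmetric]) auto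
  also have "\<dots> = (\<integral>\<^sup>+S. ennreal (L g S) \<partial>sampleM m P)"
    by (simp add: avg_loss_def ennreal_sum_divide_nonneg loss_nonneg)
  finally show ?thesis .
qed

lemma new_task_risk_eq_nn_integral_sampleM:
  "g \<in> space Gm \<Longrightarrow> new_task_risk Q alg l m g = (\<integral>\<^sup>+P. (\<integral>\<^sup>+S. ennreal (L g S) \<partial>sampleM m P) \<partial>Q)"
  unfolding new_task_risk_def
  by (intro nn_integral_cong nn_integral_test_loss_eq_avg_loss)
     (simp_all add: sets_eq_imp_space_eq[OF Q_sets])

lemma new_task_risk_eq_nn_integral_sample_dist:
  assumes g: "g \<in> space Gm"
  shows "new_task_risk Q alg l m g = (\<integral>\<^sup>+S. ennreal (L g S) \<partial>sample_dist)"
  unfolding new_task_risk_eq_nn_integral_sampleM[OF g] sample_dist_def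
  by (rule nn_integral_bind[symmetric, OF _ measurable_prob_algebraD[OF measurable_sampleM_Q]])
     (use measurable_avg_loss[OF g refl] in measurable)

lemma nn_integral_emp_loss:
  assumes g: "g \<in> space Gm" and P: "P \<in> space (prob_algebra XY)" and h: "h \<in> H"
  shows "(\<integral>\<^sup>+S. ennreal (emp_loss l m g h S) \<partial>sampleM m P) = (\<integral>\<^sup>+z. ennreal (l (h (g (fst z))) (snd z)) \<partial>P)"
proof -
  from P have P_prob: "prob_space P" and P_sets: "sets P = sets XY"
    by (auto simp: space_prob_algebra)
  let ?f = "\<lambda>z. l (h (g (fst z))) (snd z)"
  have f[measurable]: "?f \<in> borel_measurable P" by (rule measurable_hyp_loss[OF g h P_sets])
  have "(\<integral>\<^sup>+S. ennreal (emp_loss l m g h S) \<partial>sampleM m P)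
      = (\<integral>\<^sup>+S. (\<Sum>i<m. ennreal (?f (S i) / m)) \<partial>sampleM m P)"
    by (simp add: emp_loss_def ennreal_sum_divide_nonneg loss_nonneg)
  also have "\<dots> = (\<Sum>i<m. \<integral>\<^sup>+S. ennreal (?f (S i) / m) \<partial>sampleM m P)"
    unfolding sampleM_def by (intro nn_integral_sum) measurable
  also have "\<dots> = (\<Sum>i<m. \<integral>\<^sup>+z. ennreal (?f z / m) \<partial>P)"
    unfolding sampleM_def
    by (intro sum.cong refl nn_integral_PiM_component[where M="\<lambda>_. P", OF P_prob]) auto
  also have "\<dots> = of_nat m * (\<integral>\<^sup>+z. ennreal (?f z) * ennreal (1 / m) \<partial>P)"
    using loss_nonneg by (simp add: ennreal_mult[symmetric])
  also have "\<dots> = of_nat m * ((\<integral>\<^sup>+z. ennreal (?f z) \<partial>P) * ennreal (1 / m))"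
    by (intro arg_cong2[where f="(*)"] refl nn_integral_multc) measurable
  also have "\<dots> = (\<integral>\<^sup>+z. ennreal (?f z) \<partial>P) * (of_nat m * ennreal (1 / m))"
    by (simp add: ac_simps)
  also have "of_nat m * ennreal (1 / m) = 1"
    using m_pos by (simp add: ennreal_of_nat_eq_real_of_nat ennreal_mult[symmetric])
  finally show ?thesis by simp
qed

lemma avg_loss_le_emp_loss_plus_beta:
  assumes g: "g \<in> space Gm" and S: "S \<in> {..<m} \<rightarrow> space XY" and h: "h \<in> H"
  shows "L g S \<le> emp_loss l m g h S + beta g m"
proof -
  have "ereal (L g S) - ereal (emp_loss l m g h S) \<le> ereal (L g S) - (INF h\<in>H. ereal (emp_loss l m g h S))"
    by (intro ereal_minus_mono order_refl INF_lower h)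
  also have "\<dots> \<le> ereal (beta g m)" by (rule alg_regret[OF g S])
  finally show ?thesis by simp
qed

text \<open>\<open>\<beta>\<close> may be negative, so it is split into its positive and negative parts
  to stay within ennreal.\<close>
lemma nn_integral_avg_loss_le_hyp_loss:
  assumes g: "g \<in> space Gm" and P: "P \<in> space (prob_algebra XY)" and h: "h \<in> H"
  shows "(\<integral>\<^sup>+S. ennreal (L g S) \<partial>sampleM m P) + ennreal (max (- beta g m) 0)
    \<le> (\<integral>\<^sup>+z. ennreal (l (h (g (fst z))) (snd z)) \<partial>P) + ennreal (max (beta g m) 0)"
proof -
  from P have P_prob: "prob_space P" and P_sets: "sets P = sets XY"
    by (auto simp: space_prob_algebra)
  interpret S: prob_space "sampleM m P" using P_prob by (rule prob_space_sampleM)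
  have space_S: "space (sampleM m P) = {..<m} \<rightarrow>\<^sub>E space XY"
    using sets_eq_imp_space_eq[OF P_sets] by (simp add: space_sampleM)
  have L_meas: "(\<lambda>S. ennreal (L g S)) \<in> borel_measurable (sampleM m P)"
    using measurable_avg_loss[OF g sets_sampleM_cong[OF P_sets]] by measurable
  have [measurable]: "(\<lambda>z. l (h (g (fst z))) (snd z)) \<in> borel_measurable P"
    by (rule measurable_hyp_loss[OF g h P_sets])
  have emp_meas: "(\<lambda>S. ennreal (emp_loss l m g h S)) \<in> borel_measurable (sampleM m P)"
    unfolding emp_loss_def sampleM_def by measurable
  let ?b = "beta g m"
  have "(\<integral>\<^sup>+S. ennreal (L g S) \<partial>sampleM m P) + ennreal (max (- ?b) 0)
      = (\<integral>\<^sup>+S. ennreal (L g S) + ennreal (max (- ?b) 0) \<partial>sampleM m P)"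
    by (rule S.nn_integral_add_const[OF L_meas, symmetric])
  also have "\<dots> \<le> (\<integral>\<^sup>+S. ennreal (emp_loss l m g h S) + ennreal (max ?b 0) \<partial>sampleM m P)"
  proof (rule nn_integral_mono)
    fix S assume "S \<in> space (sampleM m P)"
    then have "L g S \<le> emp_loss l m g h S + ?b"
      using avg_loss_le_emp_loss_plus_beta[OF g _ h] space_S by auto
    moreover have "0 \<le> L g S" "0 \<le> emp_loss l m g h S"
      using avg_loss_nonneg[where l=l, OF loss_nonneg] emp_loss_nonneg[where l=l, OF loss_nonneg] by auto
    ultimately have "ennreal (L g S + max (- ?b) 0) \<le> ennreal (emp_loss l m g h S + max ?b 0)"
      by (intro ennreal_leI) (auto simp: max_def)
    then show "ennreal (L g S) + ennreal (max (- ?b) 0) \<le> ennreal (emp_loss l m g h S) + ennreal (max ?b 0)"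
      using \<open>0 \<le> L g S\<close> \<open>0 \<le> emp_loss l m g h S\<close> by (simp only: ennreal_plus max.cobounded2)
  qed
  also have "\<dots> = (\<integral>\<^sup>+S. ennreal (emp_loss l m g h S) \<partial>sampleM m P) + ennreal (max ?b 0)"
    by (rule S.nn_integral_add_const[OF emp_meas])
  also have "\<dots> = (\<integral>\<^sup>+z. ennreal (l (h (g (fst z))) (snd z)) \<partial>P) + ennreal (max ?b 0)"
    by (simp add: nn_integral_emp_loss[OF g P h])
  finally show ?thesis .
qed

lemma nn_integral_avg_loss_le_oracle:
  assumes g: "g \<in> space Gm" and P: "P \<in> space (prob_algebra XY)"
  shows "(\<integral>\<^sup>+S. ennreal (L g S) \<partial>sampleM m P) + ennreal (max (- beta g m) 0)
    \<le> (INF h\<in>H. \<integral>\<^sup>+z. ennreal (l (h (g (fst z))) (snd z)) \<partial>P) + ennreal (max (beta g m) 0)"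
proof (cases "H = {}")
  case False
  then show ?thesis
    using nn_integral_avg_loss_le_hyp_loss[OF g P]
    by (simp add: INF_ennreal_add_const_nonempty[symmetric] INF_greatest)
qed simp

lemma new_task_risk_le_oracle_risk:
  assumes g: "g \<in> space Gm"
  shows "enn2ereal (new_task_risk Q alg l m g) \<le> enn2ereal (oracle_risk Q H l g) + ereal (beta g m)"
proof -
  interpret Q: prob_space Q by (rule Q_prob)
  have space_Q: "space Q = space (prob_algebra XY)" using Q_sets by (rule sets_eq_imp_space_eq)
  have risk_meas: "(\<lambda>P. \<integral>\<^sup>+S. ennreal (L g S) \<partial>sampleM m P) \<in> borel_measurable Q"
    by (rule measurable_compose[OF measurable_prob_algebraD[OF measurable_sampleM_Q]
          nn_integral_measurable_subprob_algebra])
       (use measurable_avg_loss[OF g refl] in measurable)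
  have oracle_meas: "(\<lambda>P. INF h\<in>H. \<integral>\<^sup>+z. ennreal (l (h (g (fst z))) (snd z)) \<partial>P) \<in> borel_measurable Q"
    using measurable_Pair2[OF meas_inf g] Q_sets by (simp cong: measurable_cong_sets)
  let ?b = "beta g m"
  have "new_task_risk Q alg l m g + ennreal (max (- ?b) 0)
      = (\<integral>\<^sup>+P. (\<integral>\<^sup>+S. ennreal (L g S) \<partial>sampleM m P) + ennreal (max (- ?b) 0) \<partial>Q)"
    unfolding new_task_risk_eq_nn_integral_sampleM[OF g]
    by (rule Q.nn_integral_add_const[OF risk_meas, symmetric])
  also have "\<dots> \<le> (\<integral>\<^sup>+P. (INF h\<in>H. \<integral>\<^sup>+z. ennreal (l (h (g (fst z))) (snd z)) \<partial>P) + ennreal (max ?b 0) \<partial>Q)"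
    by (intro nn_integral_mono nn_integral_avg_loss_le_oracle[OF g]) (simp add: space_Q)
  also have "\<dots> = oracle_risk Q H l g + ennreal (max ?b 0)"
    unfolding oracle_risk_def by (rule Q.nn_integral_add_const[OF oracle_meas])
  finally have le: "new_task_risk Q alg l m g + ennreal (max (- ?b) 0) \<le> oracle_risk Q H l g + ennreal (max ?b 0)" .
  show ?thesis
  proof (cases "oracle_risk Q H l g")
    case (real r)
    with le obtain n where n: "new_task_risk Q alg l m g = ennreal n" "0 \<le> n"
      by (cases "new_task_risk Q alg l m g") (auto simp: top_unique)
    with le real have "ennreal (n + max (- ?b) 0) \<le> ennreal (r + max ?b 0)"
      by (subst (1 2) ennreal_plus) auto
    then have "n + max (- ?b) 0 \<le> r + max ?b 0"
      using real by (subst (asm) ennreal_le_iff) auto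
    then show ?thesis using n real by (simp add: max_def split: if_splits)
  qed simp
qed

lemma nn_integral_new_task_risk_le_expect:
  assumes rho: "sets rho = sets Gm"
  shows "enn2ereal (\<integral>\<^sup>+g. new_task_risk Q alg l m g \<partial>rho)
    \<le> ereal_expect rho (\<lambda>g. enn2ereal (oracle_risk Q H l g) + ereal (beta g m))"
proof -
  let ?f = "\<lambda>g. enn2ereal (oracle_risk Q H l g) + ereal (beta g m)"
  have le: "enn2ereal (new_task_risk Q alg l m g) \<le> ?f g" if "g \<in> space rho" for g
    using new_task_risk_le_oracle_risk that sets_eq_imp_space_eq[OF rho] by simp
  have "(\<integral>\<^sup>+g. e2ennreal (- ?f g) \<partial>rho) = 0"
    using le order_trans[OF enn2ereal_nonneg le]
    by (intro nn_integral_zero' AE_I2) (simp add: e2ennreal_neg)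
  moreover have "(\<integral>\<^sup>+g. new_task_risk Q alg l m g \<partial>rho) \<le> (\<integral>\<^sup>+g. e2ennreal (?f g) \<partial>rho)"
    using e2ennreal_mono[OF le] by (intro nn_integral_mono) simp
  then have "enn2ereal (\<integral>\<^sup>+g. new_task_risk Q alg l m g \<partial>rho) \<le> enn2ereal (\<integral>\<^sup>+g. e2ennreal (?f g) \<partial>rho)"
    by (simp add: less_eq_ennreal.rep_eq)
  ultimately show ?thesis
    unfolding ereal_expect_def by (simp add: zero_ennreal.rep_eq)
qed

end

section \<open>Meta-learning\<close>

locale meta_learning = within_task +
  fixes C eta :: real and T :: nat and pi1
  assumes T_pos: "0 < T" and eta_pos: "0 < eta"
    and alg_bounded: "\<And>g S. g \<in> space Gm \<Longrightarrow> S \<in> {..<m} \<rightarrow> space XY \<Longrightarrow>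
          0 \<le> avg_loss alg l m g S \<and> avg_loss alg l m g S \<le> C"
    and pi1_prob: "prob_space pi1" and pi1_sets: "sets pi1 = sets Gm"
begin

definition tasks_dist where
  "tasks_dist = PiM {..<T} (\<lambda>_. sample_dist)"

abbreviation "w \<equiv> ewa_weight pi1 eta L"

declare meas_avg[measurable] pi1_sets[measurable_cong] sets_sample_dist[measurable_cong]

lemma prob_space_tasks_dist: "prob_space tasks_dist"
  unfolding tasks_dist_def using prob_space_sample_dist by (intro prob_space_PiM) auto

lemma tasks_dist_component:
  "D \<in> space tasks_dist \<Longrightarrow> t < T \<Longrightarrow> D t \<in> space (sampleM m XY)"
  unfolding tasks_dist_def by (auto simp: space_PiM sets_eq_imp_space_eq[OF sets_sample_dist])

lemma measurable_tasks_dist_component[measurable]: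
  "t < T \<Longrightarrow> (\<lambda>D. D t) \<in> tasks_dist \<rightarrow>\<^sub>M sample_dist"
  unfolding tasks_dist_def by measurable

lemma measurable_avg_loss_pair:
  "sets M = sets Gm \<Longrightarrow> (\<lambda>(g, S). L g S) \<in> borel_measurable (M \<Otimes>\<^sub>M sample_dist)"
  by (simp cong: measurable_cong_sets add: sets_pair_measure_cong[OF _ sets_sample_dist] meas_avg)

lemma ewa_bounded_losses_tasks:
  assumes D: "D \<in> space tasks_dist"
  shows "ewa_bounded_losses pi1 eta C L D T"
proof (rule ewa_bounded_losses.intro[OF pi1_prob eta_pos])
  fix t assume t: "t < T"
  show "(\<lambda>g. L g (D t)) \<in> borel_measurable pi1"
    using measurable_Pair1[OF meas_avg tasks_dist_component[OF D t]] pi1_sets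
    by (simp cong: measurable_cong_sets)
  show "0 \<le> L g (D t) \<and> L g (D t) \<le> C" if "g \<in> space pi1" for g
    using alg_bounded tasks_dist_component[OF D t] that sets_eq_imp_space_eq[OF pi1_sets]
    by (auto simp: space_sampleM)
qed

lemma measurable_ewa_weight_tasks:
  assumes "t \<le> T"
  shows "(\<lambda>(D, g). w D t g) \<in> borel_measurable (tasks_dist \<Otimes>\<^sub>M pi1)"
proof -
  interpret pi1: prob_space pi1 by (rule pi1_prob)
  have [measurable]: "(\<lambda>(D, g). cum_loss L D t g) \<in> borel_measurable (tasks_dist \<Otimes>\<^sub>M pi1)"
    unfolding cum_loss_def tasks_dist_def by measurable (use assms in auto)
  show ?thesis
    unfolding ewa_weight_def ewa_partition_def by measurable
qed

lemma measurable_new_task_risk: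
  assumes "sets M = sets Gm"
  shows "new_task_risk Q alg l m \<in> borel_measurable M"
proof -
  interpret sample_dist: prob_space sample_dist by (rule prob_space_sample_dist)
  note assms[measurable_cong]
  have "(\<lambda>g. \<integral>\<^sup>+S. ennreal (L g S) \<partial>sample_dist) \<in> borel_measurable M"
    by (intro sample_dist.borel_measurable_nn_integral) measurable
  then show ?thesis
    using new_task_risk_eq_nn_integral_sample_dist sets_eq_imp_space_eq[OF assms]
    by (subst measurable_cong) auto
qed

lemma nn_integral_ewa_tasks:
  assumes "D \<in> space tasks_dist" "t < T" "f \<in> borel_measurable pi1"
  shows "(\<integral>\<^sup>+g. f g \<partial>ewa pi1 eta L D t) = (\<integral>\<^sup>+g. ennreal (w D t g) * f g \<partial>pi1)"
  using ewa_bounded_losses.nn_integral_ewa[OF ewa_bounded_losses_tasks] assms by simp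

lemma measurable_weighted_new_task_risk:
  assumes "t \<le> T"
  shows "(\<lambda>D. \<integral>\<^sup>+g. ennreal (w D t g) * new_task_risk Q alg l m g \<partial>pi1) \<in> borel_measurable tasks_dist"
proof -
  interpret pi1: prob_space pi1 by (rule pi1_prob)
  note measurable_ewa_weight_tasks[OF assms, measurable] measurable_new_task_risk[OF pi1_sets, measurable]
  show ?thesis by measurable
qed

lemma meta_risk_eq:
  "meta_risk Q alg l m T pi1 eta
    = (\<Sum>t<T. \<integral>\<^sup>+D. (\<integral>\<^sup>+g. ennreal (w D t g) * new_task_risk Q alg l m g \<partial>pi1) \<partial>tasks_dist) / of_nat T"
proof -
  let ?R = "new_task_risk Q alg l m"
  have "(\<integral>\<^sup>+G. (\<Sum>t<T. ?R (G t)) / of_nat T \<partial>PiM {..<T} (ewa pi1 eta L D))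
      = (\<Sum>t<T. \<integral>\<^sup>+g. ennreal (w D t g) * ?R g \<partial>pi1) / of_nat T"
    if D: "D \<in> space tasks_dist" for D
  proof -
    interpret E: ewa_bounded_losses pi1 eta C L D T by (rule ewa_bounded_losses_tasks[OF D])
    have R_ewa: "?R \<in> borel_measurable (ewa pi1 eta L D t)" if "t < T" for t
      using that by (intro measurable_new_task_risk) (simp add: E.sets_ewa pi1_sets)
    have R_comp: "(\<lambda>G. ?R (G t)) \<in> borel_measurable (PiM {..<T} (ewa pi1 eta L D))" if "t < T" for t
      using that
      by (intro measurable_compose[OF measurable_component_singleton[of t "{..<T}" "ewa pi1 eta L D"]
            R_ewa[OF that]]) auto
    have "(\<integral>\<^sup>+G. (\<Sum>t<T. ?R (G t)) / of_nat T \<partial>PiM {..<T} (ewa pi1 eta L D))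
        = (\<Sum>t<T. \<integral>\<^sup>+G. ?R (G t) \<partial>PiM {..<T} (ewa pi1 eta L D)) / of_nat T"
      using R_comp by (subst nn_integral_divide, measurable) (subst nn_integral_sum; simp)
    also have "\<dots> = (\<Sum>t<T. \<integral>\<^sup>+g. ?R g \<partial>ewa pi1 eta L D t) / of_nat T"
      using R_ewa E.prob_space_ewa by (intro arg_cong2[where f="(/)"] sum.cong refl nn_integral_PiM_component) auto
    also have "\<dots> = (\<Sum>t<T. \<integral>\<^sup>+g. ennreal (w D t g) * ?R g \<partial>pi1) / of_nat T"
      using D measurable_new_task_risk[OF pi1_sets] by (simp add: nn_integral_ewa_tasks)
    finally show ?thesis .
  qed
  then have "meta_risk Q alg l m T pi1 eta
      = (\<integral>\<^sup>+D. (\<Sum>t<T. \<integral>\<^sup>+g. ennreal (w D t g) * ?R g \<partial>pi1) / of_nat T \<partial>tasks_dist)"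
    unfolding meta_risk_def tasks_dist_def sample_dist_def by (intro nn_integral_cong) simp
  also have "\<dots> = (\<Sum>t<T. \<integral>\<^sup>+D. (\<integral>\<^sup>+g. ennreal (w D t g) * ?R g \<partial>pi1) \<partial>tasks_dist) / of_nat T"
    using measurable_weighted_new_task_risk
    by (subst nn_integral_divide, measurable) (subst nn_integral_sum; simp)
  finally show ?thesis .
qed

text \<open>The weight of step \<open>t\<close> does not see the sample of task \<open>t\<close>, which may therefore be
  replaced by an independent fresh sample.\<close>
lemma nn_integral_weighted_new_task_risk_eq:
  assumes t: "t < T"
  shows "(\<integral>\<^sup>+D. (\<integral>\<^sup>+g. ennreal (w D t g) * new_task_risk Q alg l m g \<partial>pi1) \<partial>tasks_dist)
       = (\<integral>\<^sup>+D. (\<integral>\<^sup>+g. ennreal (w D t g) * ennreal (L g (D t)) \<partial>pi1) \<partial>tasks_dist)"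
proof -
  interpret pi1: prob_space pi1 by (rule pi1_prob)
  interpret S: prob_space sample_dist by (rule prob_space_sample_dist)
  interpret pair_sigma_finite sample_dist pi1 by unfold_locales
  define \<phi> where "\<phi> D S = (\<integral>\<^sup>+g. ennreal (w D t g) * ennreal (L g S) \<partial>pi1)" for D S
  note measurable_ewa_weight_tasks[OF less_imp_le[OF t], measurable] measurable_avg_loss_pair[OF pi1_sets, measurable]
  have \<phi>_meas: "(\<lambda>(D, S). \<phi> D S) \<in> borel_measurable (PiM {..<T} (\<lambda>_. sample_dist) \<Otimes>\<^sub>M sample_dist)"
    unfolding \<phi>_def tasks_dist_def[symmetric] using t by measurable
  have "(\<integral>\<^sup>+S. \<phi> D S \<partial>sample_dist) = (\<integral>\<^sup>+g. ennreal (w D t g) * new_task_risk Q alg l m g \<partial>pi1)"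
    if D: "D \<in> space tasks_dist" for D
  proof -
    have [measurable]: "w D t \<in> borel_measurable pi1"
      using ewa_bounded_losses.measurable_ewa_weight[OF ewa_bounded_losses_tasks[OF D]] t by simp
    have "(\<integral>\<^sup>+S. \<phi> D S \<partial>sample_dist) = (\<integral>\<^sup>+g. (\<integral>\<^sup>+S. ennreal (w D t g) * ennreal (L g S) \<partial>sample_dist) \<partial>pi1)"
      unfolding \<phi>_def by (rule Fubini'[symmetric]) measurable
    also have "\<dots> = (\<integral>\<^sup>+g. ennreal (w D t g) * new_task_risk Q alg l m g \<partial>pi1)"
      using measurable_avg_loss[OF _ sets_sample_dist]
      by (intro nn_integral_cong)
         (simp add: nn_integral_cmult new_task_risk_eq_nn_integral_sample_dist sets_eq_imp_space_eq[OF pi1_sets])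
    finally show ?thesis .
  qed
  then have "(\<integral>\<^sup>+D. (\<integral>\<^sup>+g. ennreal (w D t g) * new_task_risk Q alg l m g \<partial>pi1) \<partial>tasks_dist)
      = (\<integral>\<^sup>+D. (\<integral>\<^sup>+S. \<phi> D S \<partial>sample_dist) \<partial>tasks_dist)"
    by (intro nn_integral_cong) simp
  also have "\<dots> = (\<integral>\<^sup>+D. \<phi> D (D t) \<partial>tasks_dist)"
    unfolding tasks_dist_def using t
    by (intro nn_integral_PiM_resample[symmetric, OF prob_space_sample_dist _ _ \<phi>_meas])
       (auto simp: \<phi>_def ewa_weight_fun_upd)
  finally show ?thesis unfolding \<phi>_def .
qed

lemma measurable_task_loss:
  assumes rho: "prob_space rho" "sets rho = sets Gm" and t: "t < T"
  shows "(\<lambda>D. \<integral>\<^sup>+g. ennreal (L g (D t)) \<partial>rho) \<in> borel_measurable tasks_dist"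
proof -
  interpret rho: prob_space rho by (rule rho(1))
  note measurable_avg_loss_pair[OF rho(2), measurable]
  show ?thesis using t by measurable
qed

lemma measurable_weighted_task_loss:
  assumes t: "t < T"
  shows "(\<lambda>D. \<integral>\<^sup>+g. ennreal (w D t g) * ennreal (L g (D t)) \<partial>pi1) \<in> borel_measurable tasks_dist"
proof -
  interpret pi1: prob_space pi1 by (rule pi1_prob)
  note measurable_avg_loss_pair[OF pi1_sets, measurable]
    measurable_ewa_weight_tasks[OF less_imp_le[OF t], measurable]
  show ?thesis using t by measurable
qed

lemma nn_integral_task_loss:
  assumes rho: "prob_space rho" "sets rho = sets Gm" and t: "t < T"
  shows "(\<integral>\<^sup>+D. (\<integral>\<^sup>+g. ennreal (L g (D t)) \<partial>rho) \<partial>tasks_dist) = (\<integral>\<^sup>+g. new_task_risk Q alg l m g \<partial>rho)"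
proof -
  interpret rho: prob_space rho by (rule rho(1))
  interpret S: prob_space sample_dist by (rule prob_space_sample_dist)
  interpret pair_sigma_finite rho sample_dist by unfold_locales
  note measurable_avg_loss_pair[OF rho(2), measurable]
  have "(\<integral>\<^sup>+D. (\<integral>\<^sup>+g. ennreal (L g (D t)) \<partial>rho) \<partial>tasks_dist)
      = (\<integral>\<^sup>+S. (\<integral>\<^sup>+g. ennreal (L g S) \<partial>rho) \<partial>sample_dist)"
    unfolding tasks_dist_def using t prob_space_sample_dist
    by (intro nn_integral_PiM_component) measurable
  also have "\<dots> = (\<integral>\<^sup>+g. (\<integral>\<^sup>+S. ennreal (L g S) \<partial>sample_dist) \<partial>rho)"
    by (rule Fubini') measurable
  also have "\<dots> = (\<integral>\<^sup>+g. new_task_risk Q alg l m g \<partial>rho)"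
    by (intro nn_integral_cong)
       (simp add: new_task_risk_eq_nn_integral_sample_dist sets_eq_imp_space_eq[OF rho(2)])
  finally show ?thesis .
qed

lemma ewa_regret_nn_integral:
  assumes D: "D \<in> space tasks_dist"
    and rho: "prob_space rho" "sets rho = sets Gm"
    and ac: "absolutely_continuous pi1 rho" and int: "integrable rho (entropy_density (exp 1) pi1 rho)"
  shows "(\<Sum>t<T. \<integral>\<^sup>+g. ennreal (L g (D t)) \<partial>ewa pi1 eta L D t)
    \<le> (\<Sum>t<T. \<integral>\<^sup>+g. ennreal (L g (D t)) \<partial>rho)
      + ennreal (T * eta * C\<^sup>2 / 8 + KL_divergence (exp 1) pi1 rho / eta)"
proof -
  interpret E: ewa_bounded_losses pi1 eta C L D T by (rule ewa_bounded_losses_tasks[OF D])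
  have rho_pi1: "sets rho = sets pi1" using rho(2) pi1_sets by simp
  let ?KL = "KL_divergence (exp 1) pi1 rho"
  have KL_nonneg: "0 \<le> ?KL"
    by (rule KL_divergence_nonneg_prob[OF pi1_prob rho(1) rho_pi1 ac int])
  have ewa: "(\<integral>\<^sup>+g. ennreal (L g (D t)) \<partial>ewa pi1 eta L D t) = ennreal (\<integral>g. L g (D t) \<partial>ewa pi1 eta L D t)"
    and ewa_nonneg: "0 \<le> (\<integral>g. L g (D t) \<partial>ewa pi1 eta L D t)" if t: "t < T" for t
    using t by (intro E.nn_integral_loss_eq_integral E.prob_space_ewa E.sets_ewa; simp)+
  have rho_eq: "(\<integral>\<^sup>+g. ennreal (L g (D t)) \<partial>rho) = ennreal (\<integral>g. L g (D t) \<partial>rho)"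
    and rho_nonneg: "0 \<le> (\<integral>g. L g (D t) \<partial>rho)" if t: "t < T" for t
    using E.nn_integral_loss_eq_integral[OF t rho(1) rho_pi1] by auto
  have "(\<Sum>t<T. \<integral>\<^sup>+g. ennreal (L g (D t)) \<partial>ewa pi1 eta L D t)
      = (\<Sum>t<T. ennreal (\<integral>g. L g (D t) \<partial>ewa pi1 eta L D t))"
    by (intro sum.cong refl) (simp add: ewa)
  also have "\<dots> = ennreal (\<Sum>t<T. \<integral>g. L g (D t) \<partial>ewa pi1 eta L D t)"
    by (intro sum_ennreal) (simp add: ewa_nonneg)
  also have "\<dots> \<le> ennreal ((\<Sum>t<T. \<integral>g. L g (D t) \<partial>rho) + (T * eta * C\<^sup>2 / 8 + ?KL / eta))"
    using E.ewa_regret[OF rho(1) rho_pi1 ac int] by (intro ennreal_leI) (simp add: algebra_simps)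
  also have "\<dots> = ennreal (\<Sum>t<T. \<integral>g. L g (D t) \<partial>rho) + ennreal (T * eta * C\<^sup>2 / 8 + ?KL / eta)"
    using rho_nonneg KL_nonneg eta_pos by (intro ennreal_plus sum_nonneg) auto
  also have "ennreal (\<Sum>t<T. \<integral>g. L g (D t) \<partial>rho) = (\<Sum>t<T. \<integral>\<^sup>+g. ennreal (L g (D t)) \<partial>rho)"
    using rho_eq rho_nonneg by (subst sum_ennreal[symmetric]) auto
  finally show ?thesis .
qed

lemma meta_risk_le_nn_integral:
  assumes rho: "prob_space rho" "sets rho = sets Gm"
    and ac: "absolutely_continuous pi1 rho" and int: "integrable rho (entropy_density (exp 1) pi1 rho)"
  shows "meta_risk Q alg l m T pi1 eta
    \<le> (\<integral>\<^sup>+g. new_task_risk Q alg l m g \<partial>rho) + ennreal (eta * C\<^sup>2 / 8 + KL_divergence (exp 1) pi1 rho / (eta * T))"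
proof -
  let ?KL = "KL_divergence (exp 1) pi1 rho"
  let ?c = "T * eta * C\<^sup>2 / 8 + ?KL / eta"
  have c_nonneg: "0 \<le> ?c"
    using KL_divergence_nonneg_prob[OF pi1_prob rho(1) _ ac int] rho(2) pi1_sets eta_pos by simp
  have loss_meas: "(\<lambda>g. ennreal (L g (D t))) \<in> borel_measurable pi1" if "D \<in> space tasks_dist" "t < T" for D t
    using ewa_bounded_losses.measurable_loss[OF ewa_bounded_losses_tasks] that by measurable
  have sum_over_tasks: "(\<Sum>t<T. \<integral>\<^sup>+D. (\<integral>\<^sup>+g. ennreal (w D t g) * ennreal (L g (D t)) \<partial>pi1) \<partial>tasks_dist)
      = (\<integral>\<^sup>+D. (\<Sum>t<T. \<integral>\<^sup>+g. ennreal (L g (D t)) \<partial>ewa pi1 eta L D t) \<partial>tasks_dist)"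
    using measurable_weighted_task_loss
    by (subst nn_integral_sum[symmetric]) (auto intro!: nn_integral_cong sum.cong simp: nn_integral_ewa_tasks loss_meas)
  have rho_sum: "(\<integral>\<^sup>+D. (\<Sum>t<T. \<integral>\<^sup>+g. ennreal (L g (D t)) \<partial>rho) \<partial>tasks_dist)
      = of_nat T * (\<integral>\<^sup>+g. new_task_risk Q alg l m g \<partial>rho)"
    using measurable_task_loss[OF rho] by (subst nn_integral_sum) (auto simp: nn_integral_task_loss[OF rho])
  have "meta_risk Q alg l m T pi1 eta
      = (\<Sum>t<T. \<integral>\<^sup>+D. (\<integral>\<^sup>+g. ennreal (w D t g) * ennreal (L g (D t)) \<partial>pi1) \<partial>tasks_dist) / of_nat T"
    by (simp add: meta_risk_eq nn_integral_weighted_new_task_risk_eq)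
  also have "\<dots> = (\<integral>\<^sup>+D. (\<Sum>t<T. \<integral>\<^sup>+g. ennreal (L g (D t)) \<partial>ewa pi1 eta L D t) \<partial>tasks_dist) / of_nat T"
    unfolding sum_over_tasks ..
  also have "\<dots> \<le> (\<integral>\<^sup>+D. (\<Sum>t<T. \<integral>\<^sup>+g. ennreal (L g (D t)) \<partial>rho) + ennreal ?c \<partial>tasks_dist) / of_nat T"
    by (intro divide_right_mono_ennreal nn_integral_mono ewa_regret_nn_integral[OF _ rho ac int])
  also have "\<dots> = (of_nat T * (\<integral>\<^sup>+g. new_task_risk Q alg l m g \<partial>rho) + ennreal ?c) / of_nat T"
    using measurable_task_loss[OF rho]
    by (simp add: prob_space.nn_integral_add_const[OF prob_space_tasks_dist] borel_measurable_sum rho_sum)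
  also have "\<dots> = (\<integral>\<^sup>+g. new_task_risk Q alg l m g \<partial>rho) + ennreal (eta * C\<^sup>2 / 8 + ?KL / (eta * T))"
    using T_pos eta_pos c_nonneg by (simp add: ennreal_of_nat_mult_add_divide field_simps)
  finally show ?thesis .
qed

lemma meta_risk_le:
  assumes rho: "prob_space rho" "sets rho = sets Gm"
  shows "enn2ereal (meta_risk Q alg l m T pi1 eta)
     \<le> ereal_expect rho (\<lambda>g. enn2ereal (oracle_risk Q H l g) + ereal (beta g m))
          + ereal (eta * C\<^sup>2 / 8) + KL rho pi1 / ereal (eta * real T)"
proof (cases "absolutely_continuous pi1 rho \<and> integrable rho (entropy_density (exp 1) pi1 rho)")
  case True
  let ?KL = "KL_divergence (exp 1) pi1 rho"
  have "0 \<le> ?KL" using True KL_divergence_nonneg_prob[OF pi1_prob rho(1)] rho(2) pi1_sets by simp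
  then have "enn2ereal (meta_risk Q alg l m T pi1 eta)
      \<le> enn2ereal (\<integral>\<^sup>+g. new_task_risk Q alg l m g \<partial>rho) + ereal (eta * C\<^sup>2 / 8 + ?KL / (eta * T))"
    using meta_risk_le_nn_integral[OF rho] True eta_pos T_pos
    by (simp add: less_eq_ennreal.rep_eq plus_ennreal.rep_eq)
  also have "\<dots> \<le> ereal_expect rho (\<lambda>g. enn2ereal (oracle_risk Q H l g) + ereal (beta g m))
      + ereal (eta * C\<^sup>2 / 8 + ?KL / (eta * T))"
    by (intro add_right_mono nn_integral_new_task_risk_le_expect[OF rho(2)])
  finally show ?thesis using True eta_pos T_pos by (simp add: KL_def add.assoc)
next
  case False
  then have "KL rho pi1 = \<infinity>" by (simp add: KL_def)
  then show ?thesis using eta_pos T_pos by simp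
qed

end

theorem theorem5:
  fixes XY :: "('x \<times> 'y) measure"
    and Gm :: "('x \<Rightarrow> 'z) measure"
    and H :: "('z \<Rightarrow> real) set"
    and l :: "real \<Rightarrow> 'y \<Rightarrow> real"
    and alg :: "('x \<Rightarrow> 'z) \<Rightarrow> ('x \<times> 'y) list \<Rightarrow> ('z \<Rightarrow> real)"
    and beta :: "('x \<Rightarrow> 'z) \<Rightarrow> nat \<Rightarrow> real"
    and C eta :: real
    and m T :: nat
    and Q :: "('x \<times> 'y) measure measure"
    and pi1 :: "('x \<Rightarrow> 'z) measure"
  assumes m_pos: "0 < m" and T_pos: "0 < T" and eta_pos: "0 < eta"
    and loss_nonneg: "\<And>u y. 0 \<le> l u y"
    and alg_bounded: "\<And>g S. g \<in> space Gm \<Longrightarrow> S \<in> {..<m} \<rightarrow> space XY \<Longrightarrow>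
          0 \<le> avg_loss alg l m g S \<and> avg_loss alg l m g S \<le> C"
    and alg_regret: "\<And>g S. g \<in> space Gm \<Longrightarrow> S \<in> {..<m} \<rightarrow> space XY \<Longrightarrow>
          ereal (avg_loss alg l m g S) - (INF h\<in>H. ereal (emp_loss l m g h S)) \<le> ereal (beta g m)"
    and Q_prob: "prob_space Q" and Q_sets: "sets Q = sets (prob_algebra XY)"
    and pi1_prob: "prob_space pi1" and pi1_sets: "sets pi1 = sets Gm"
    and meas_avg: "(\<lambda>(g, S). avg_loss alg l m g S) \<in> borel_measurable (Gm \<Otimes>\<^sub>M sampleM m XY)"
    and meas_alg: "\<And>i. i < m \<Longrightarrow>
          (\<lambda>(g, S, z). l (alg g (pref S i) (g (fst z))) (snd z))
            \<in> borel_measurable (Gm \<Otimes>\<^sub>M sampleM m XY \<Otimes>\<^sub>M XY)"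
    and meas_H: "\<And>h. h \<in> H \<Longrightarrow>
          (\<lambda>(g, z). l (h (g (fst z))) (snd z)) \<in> borel_measurable (Gm \<Otimes>\<^sub>M XY)"
    and meas_inf: "(\<lambda>(g, P). INF h\<in>H. \<integral>\<^sup>+ z. ennreal (l (h (g (fst z))) (snd z)) \<partial>P)
          \<in> borel_measurable (Gm \<Otimes>\<^sub>M prob_algebra XY)"
    and meas_beta: "(\<lambda>g. beta g m) \<in> borel_measurable Gm"
  shows "enn2ereal (meta_risk Q alg l m T pi1 eta)
     \<le> (INF rho\<in>{rho. prob_space rho \<and> sets rho = sets Gm}.
          ereal_expect rho (\<lambda>g. enn2ereal (oracle_risk Q H l g) + ereal (beta g m))
          + ereal (eta * C\<^sup>2 / 8)
          + KL rho pi1 / ereal (eta * real T))"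
proof -
  interpret meta_learning XY Gm H l alg beta m Q C eta T pi1
    by (intro meta_learning.intro within_task.intro meta_learning_axioms.intro) fact+
  show ?thesis by (rule INF_greatest) (auto intro: meta_risk_le)
qed

end
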